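(* The group $N/g_SN$ is isomorphic to $\mathbb{Z}/g_S\mathbb{Z}$. Moreover, for every finite $1\leq k\leq\lvert S\rvert$, the group $N/g_kN$ is isomorphic to a subgroup of $\mathbb{Z}/g_k\mathbb{Z}$.
   Context: $S\subset\{2,3,\dots\}$ is a non-empty (possibly infinite) set of pairwise relatively prime integers, $N:=\mathbb{Z}[\{1/p:p\in S\}]\subset\mathbb{Q}$, $g_S:=\gcd(\{p-1:p\in S\})$, and for $1\leq k\leq\lvert S\rvert$, $g_k:=\gcd(p_1-1,\dots,p_k-1)$ where $p_1<\dots<p_k$ are the $k$ smallest elements of $S$. *)

theory Defs
  imports Complex_Main "HOL-Algebra.Elementary_Groups"
begin

inductive_set Nring :: "nat set \<Rightarrow> rat set" for S :: "nat set" where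
  one: "1 \<in> Nring S"
| inv: "p \<in> S \<Longrightarrow> 1 / of_nat p \<in> Nring S"
| add: "x \<in> Nring S \<Longrightarrow> y \<in> Nring S \<Longrightarrow> x + y \<in> Nring S"
| neg: "x \<in> Nring S \<Longrightarrow> - x \<in> Nring S"
| mult: "x \<in> Nring S \<Longrightarrow> y \<in> Nring S \<Longrightarrow> x * y \<in> Nring S"

definition Ngroup :: "nat set \<Rightarrow> rat monoid" where
  "Ngroup S = \<lparr>carrier = Nring S, monoid.mult = (+), one = 0\<rparr>"

definition multN :: "nat \<Rightarrow> nat set \<Rightarrow> rat set" where
  "multN g S = (\<lambda>x. of_nat g * x) ` Nring S"

definition gS :: "nat set \<Rightarrow> nat" where
  "gS S = Gcd ((\<lambda>p. p - 1) ` S)"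

definition smallest :: "nat \<Rightarrow> nat set \<Rightarrow> nat set" where
  "smallest k S = {p \<in> S. card {q \<in> S. q < p} < k}"

definition gk :: "nat \<Rightarrow> nat set \<Rightarrow> nat" where
  "gk k S = Gcd ((\<lambda>p. p - 1) ` smallest k S)"

end

theory Submission
  imports Defs
begin

text \<open>
  Every element of \<open>N\<close> is congruent to an integer modulo \<open>gN\<close>: for \<open>1/p\<close> pick
  \<open>p\<^sup>i\<^sup>+\<^sup>t \<equiv> p\<^sup>i (mod g)\<close> by pigeonhole, then \<open>1/p \<equiv> p\<^sup>t\<^sup>-\<^sup>1\<close>, and congruences
  are compatible with sums and products. So \<open>n \<mapsto> n + gN\<close> maps \<open>\<int>\<close> onto \<open>N/gN\<close>; its
  kernel is \<open>q\<int>\<close> for some \<open>q | g\<close>, and \<open>N/gN \<cong> \<int>/q\<int>\<close>, which is the subgroup of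
  multiples of \<open>g/q\<close> in \<open>\<int>/g\<int>\<close>. If moreover \<open>g | p - 1\<close> for all \<open>p \<in> S\<close>, every
  element of \<open>N\<close> has a denominator coprime to \<open>g\<close>, so \<open>n/g \<in> N\<close> forces \<open>g | n\<close>,
  i.e. \<open>q = g\<close>.
\<close>

lemma Nring_of_nat: "of_nat m \<in> Nring S"
proof (induction m)
  case 0
  have "(1::rat) + - 1 \<in> Nring S" by (intro Nring.add Nring.neg Nring.one)
  then show ?case by simp
next
  case (Suc m)
  then show ?case using Nring.add[OF Suc Nring.one] by (simp add: add.commute)
qed

lemma Nring_of_int: "of_int n \<in> Nring S"
  using Nring_of_nat[of "nat n" S] Nring.neg[OF Nring_of_nat[of "nat (- n)" S]]
  by (cases "n \<ge> 0") simp_all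

lemma Nring_power: "x \<in> Nring S \<Longrightarrow> x ^ m \<in> Nring S"
  by (induction m) (auto intro: Nring.mult Nring.one)

lemma mem_multN_iff: "y \<in> multN g S \<longleftrightarrow> (\<exists>x\<in>Nring S. y = of_nat g * x)"
  by (auto simp: multN_def)

lemma multN_add: "x \<in> multN g S \<Longrightarrow> y \<in> multN g S \<Longrightarrow> x + y \<in> multN g S"
  unfolding mem_multN_iff by (metis Nring.add distrib_left)

lemma multN_uminus: "x \<in> multN g S \<Longrightarrow> - x \<in> multN g S"
  unfolding mem_multN_iff by (metis Nring.neg mult_minus_right)

lemma multN_mult: "x \<in> Nring S \<Longrightarrow> y \<in> multN g S \<Longrightarrow> x * y \<in> multN g S"
  unfolding mem_multN_iff by (metis Nring.mult mult.left_commute)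

lemma of_nat_mem_multN: "of_nat g \<in> multN g S"
  unfolding mem_multN_iff using Nring.one by force

lemma zero_mem_multN: "0 \<in> multN g S"
  using multN_mult[OF Nring_of_int[of 0] of_nat_mem_multN] by simp

lemma multN_subset_Nring: "multN g S \<subseteq> Nring S"
  unfolding multN_def by (auto intro: Nring.mult Nring_of_nat)

lemma of_int_mem_multN_iff:
  "g > 0 \<Longrightarrow> of_int n \<in> multN g S \<longleftrightarrow> of_int n / of_nat g \<in> Nring S"
  unfolding mem_multN_iff by (auto intro: bexI[of _ "of_int n / of_nat g"])

lemma power_mod_repeats:
  fixes p g :: nat
  assumes "g > 0"
  obtains i t where "t > 0" "p ^ (i + t) mod g = p ^ i mod g"
proof -
  have "(\<lambda>i. p ^ i mod g) ` {0..g} \<subseteq> {0..<g}"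
    using assms by auto
  then have "card ((\<lambda>i. p ^ i mod g) ` {0..g}) \<le> card {0..<g}"
    by (intro card_mono) simp_all
  then have "card ((\<lambda>i. p ^ i mod g) ` {0..g}) < card {0..g}"
    by simp
  then have "\<not> inj_on (\<lambda>i. p ^ i mod g) {0..g}"
    by (rule pigeonhole)
  then obtain i j where ne: "i \<noteq> j" and eq: "p ^ i mod g = p ^ j mod g"
    unfolding inj_on_def by blast
  show thesis
  proof (cases "i < j")
    case True
    show ?thesis
      by (rule that[of "j - i" i]) (use True eq in simp_all)
  next
    case False
    then have "j < i" using ne by simp
    show ?thesis
      by (rule that[of "i - j" j]) (use \<open>j < i\<close> eq in simp_all)
  qed
qed

lemma inverse_congruent_int:
  assumes "g > 0" "p \<in> S"
  shows "\<exists>n. 1 / of_nat p - of_int n \<in> multN g S"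
proof (cases "p = 0")
  case True \<comment> \<open>\<open>1 / 0 = 0\<close> in \<open>\<rat>\<close>\<close>
  then show ?thesis using zero_mem_multN by (intro exI[of _ 0]) simp
next
  case False
  define u :: rat where "u = 1 / of_nat p"
  have pu: "u * of_nat p = 1" using False by (simp add: u_def)
  obtain i t where t: "t > 0" and "p ^ (i + t) mod g = p ^ i mod g"
    using power_mod_repeats[OF assms(1)] .
  then have "int g dvd int p ^ (i + t) - int p ^ i"
    by (metis mod_eq_dvd_iff of_nat_mod of_nat_power)
  then obtain c where c: "int p ^ (i + t) - int p ^ i = int g * c" by (elim dvdE)
  have "of_nat p ^ (i + t) - of_nat p ^ i = (of_nat g * of_int c :: rat)"
    using arg_cong[OF c, of "of_int :: int \<Rightarrow> rat"] by simp
  then have diff: "of_nat p ^ i - of_nat p ^ (i + t) = - (of_nat g * of_int c :: rat)"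
    by (metis minus_diff_eq)
  have "u ^ (i + 1) * of_nat p ^ i = u * (u * of_nat p) ^ i"
    by (simp add: power_mult_distrib)
  then have ui: "u ^ (i + 1) * of_nat p ^ i = u" by (simp add: pu)
  have "i + t = (i + 1) + (t - 1)" using t by simp
  then have "u ^ (i + 1) * of_nat p ^ (i + t) = u ^ (i + 1) * (of_nat p ^ (i + 1) * of_nat p ^ (t - 1))"
    by (metis power_add)
  also have "\<dots> = (u * of_nat p) ^ (i + 1) * of_nat p ^ (t - 1)"
    by (simp only: power_mult_distrib mult.assoc)
  finally have uit: "u ^ (i + 1) * of_nat p ^ (i + t) = of_nat p ^ (t - 1)" by (simp add: pu)
  have "u - of_int (int p ^ (t - 1)) = u ^ (i + 1) * (of_nat p ^ i - of_nat p ^ (i + t))"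
    by (simp only: right_diff_distrib ui uit of_int_power of_int_of_nat_eq)
  also have "\<dots> = (of_int (- c) * u ^ (i + 1)) * of_nat g"
    by (simp add: diff)
  also have "\<dots> \<in> multN g S"
    unfolding u_def
    by (intro multN_mult Nring.mult Nring_of_int Nring_power Nring.inv assms(2) of_nat_mem_multN)
  finally show ?thesis unfolding u_def by blast
qed

lemma Nring_congruent_int:
  assumes "g > 0" "x \<in> Nring S"
  shows "\<exists>n. x - of_int n \<in> multN g S"
  using assms(2)
proof (induction x rule: Nring.induct)
  case one
  show ?case using zero_mem_multN by (intro exI[of _ 1]) simp
next
  case (inv p)
  then show ?case using inverse_congruent_int assms(1) by blast
next
  case (add x y)
  then obtain n m where "x - of_int n \<in> multN g S" "y - of_int m \<in> multN g S" by blast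
  from multN_add[OF this] show ?case
    by (intro exI[of _ "n + m"]) (simp add: algebra_simps)
next
  case (neg x)
  then obtain n where "x - of_int n \<in> multN g S" by blast
  from multN_uminus[OF this] show ?case
    by (intro exI[of _ "- n"]) (simp add: algebra_simps)
next
  case (mult x y)
  then obtain n m where n: "x - of_int n \<in> multN g S" and m: "y - of_int m \<in> multN g S"
    by blast
  have "x * (y - of_int m) + of_int m * (x - of_int n) \<in> multN g S"
    by (intro multN_add multN_mult n m Nring_of_int mult.hyps)
  then show ?case
    by (intro exI[of _ "n * m"]) (simp add: algebra_simps)
qed

lemma coprime_if_dvd_pred:
  fixes p g :: nat
  assumes "p > 0" "g dvd p - 1"
  shows "coprime p g"
  using coprime_divisors[OF dvd_refl assms(2) coprime_diff_one_right_nat[OF assms(1)]] .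

lemma Nring_coprime_denominator:
  assumes "\<forall>p\<in>S. coprime p g" "x \<in> Nring S"
  shows "\<exists>d. coprime d g \<and> of_nat d * x \<in> \<int>"
  using assms(2)
proof (induction x rule: Nring.induct)
  case one
  show ?case by (intro exI[of _ 1]) simp
next
  case (inv p)
  then show ?case using assms(1) by (intro exI[of _ p]) simp
next
  case (add x y)
  then obtain d e where d: "coprime d g" "of_nat d * x \<in> \<int>"
    and e: "coprime e g" "of_nat e * y \<in> \<int>" by blast
  have "of_nat (d * e) * (x + y) = of_nat e * (of_nat d * x) + of_nat d * (of_nat e * y)"
    by (simp add: algebra_simps)
  also have "\<dots> \<in> \<int>" using d(2) e(2) by (meson Ints_add Ints_mult Ints_of_nat)
  finally show ?case using d e by (intro exI[of _ "d * e"]) simp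
next
  case (neg x)
  then show ?case by (auto intro: Ints_minus)
next
  case (mult x y)
  then obtain d e where d: "coprime d g" "of_nat d * x \<in> \<int>"
    and e: "coprime e g" "of_nat e * y \<in> \<int>" by blast
  have "of_nat (d * e) * (x * y) = (of_nat d * x) * (of_nat e * y)"
    by (simp add: algebra_simps)
  also have "\<dots> \<in> \<int>" using d(2) e(2) by (rule Ints_mult)
  finally show ?case using d e by (intro exI[of _ "d * e"]) simp
qed

lemma dvd_if_of_int_mem_multN:
  assumes "g > 0" "\<forall>p\<in>S. coprime p g" "of_int n \<in> multN g S"
  shows "int g dvd n"
proof -
  have "of_int n / of_nat g \<in> Nring S"
    using assms(1,3) of_int_mem_multN_iff by blast
  then obtain d where d: "coprime d g" "of_nat d * (of_int n / of_nat g) \<in> (\<int> :: rat set)"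
    using Nring_coprime_denominator[OF assms(2)] by blast
  then obtain a where "of_nat d * (of_int n / of_nat g) = (of_int a :: rat)"
    by (elim Ints_cases)
  then have "(of_int (int d * n) :: rat) = of_int (int g * a)"
    using assms(1) by (simp add: field_simps)
  then have "int d * n = int g * a"
    by (rule of_int_eq_iff[THEN iffD1])
  then have "int g dvd int d * n" by simp
  moreover have "coprime (int g) (int d)" using d(1) by (simp add: coprime_commute)
  ultimately show ?thesis by (simp add: coprime_dvd_mult_right_iff)
qed

lemma iso_onto_image_of_equal_kernels:
  assumes f: "group_hom G H f" "f ` carrier G = carrier H"
    and h: "group_hom G K h"
    and ker: "kernel G H f = kernel G K h"
  shows "H \<cong> K\<lparr>carrier := h ` carrier G\<rparr>"
proof -
  let ?K' = "K\<lparr>carrier := h ` carrier G\<rparr>"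
  have "group ?K'"
    using subgroup.subgroup_is_group[OF group_hom.img_is_subgroup[OF h]] h
    by (simp add: group_hom_def)
  moreover have "h \<in> hom G ?K'"
    using group_hom.homh[OF h] by (auto simp: hom_def)
  ultimately have h': "group_hom G ?K' h"
    using h by (simp add: group_hom_def group_hom_axioms_def)
  have "kernel G ?K' h = kernel G H f"
    using ker by (simp add: kernel_def)
  then have "G Mod kernel G H f \<cong> ?K'"
    using group_hom.FactGroup_iso[OF h'] by simp
  moreover have "H \<cong> G Mod kernel G H f"
    using group.iso_sym[OF normal.factorgroup_is_group[OF group_hom.normal_kernel[OF f(1)]]
        group_hom.FactGroup_iso[OF f]] .
  ultimately show ?thesis
    using iso_trans by blast
qed

lemma integer_subgroup_eq_multiples:
  assumes K: "subgroup K integer_group" and "int g \<in> K" "g > 0"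
  obtains q where "q dvd g" "K = {n. int q dvd n}"
proof -
  define P where "P q \<longleftrightarrow> q > 0 \<and> int q \<in> K" for q
  define q where "q = (LEAST q. P q)"
  have "P g" using assms by (simp add: P_def)
  then have Pq: "P q" and q_least: "\<And>r. P r \<Longrightarrow> q \<le> r"
    unfolding q_def by (auto intro: LeastI Least_le)
  have multiple_mem: "int q * c \<in> K" for c
    using group.subgroup_int_pow_closed[OF group_integer_group K, of "int q" c] Pq
    by (simp add: P_def mult.commute)
  have mem_dvd: "int q dvd n" if "n \<in> K" for n
  proof (rule ccontr)
    assume "\<not> int q dvd n"
    moreover have "0 \<le> n mod int q" using Pq by (simp add: P_def)
    ultimately have r: "0 < n mod int q" by (simp add: dvd_eq_mod_eq_0 order_le_neq_trans)
    have "n mod int q = n \<otimes>\<^bsub>integer_group\<^esub> inv\<^bsub>integer_group\<^esub> (int q * (n div int q))"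
      by (simp flip: minus_mult_div_eq_mod)
    also have "\<dots> \<in> K"
      using K that multiple_mem by (intro subgroup.m_closed subgroup.m_inv_closed)
    finally have "P (nat (n mod int q))" using r by (simp add: P_def)
    then have "q \<le> nat (n mod int q)" by (rule q_least)
    moreover have "nat (n mod int q) < q" using Pq r by (simp add: P_def nat_less_iff)
    ultimately show False by simp
  qed
  have "K = {n. int q dvd n}" using mem_dvd multiple_mem by (auto elim!: dvdE)
  moreover have "q dvd g" using mem_dvd[OF assms(2)] by simp
  ultimately show thesis using that by blast
qed

lemma carrier_Ngroup [simp]: "carrier (Ngroup S) = Nring S"
  and mult_Ngroup [simp]: "x \<otimes>\<^bsub>Ngroup S\<^esub> y = x + y"
  and one_Ngroup [simp]: "\<one>\<^bsub>Ngroup S\<^esub> = 0"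
  by (simp_all add: Ngroup_def)

lemma comm_group_Ngroup: "comm_group (Ngroup S)"
proof -
  have "group (Ngroup S)"
  proof (rule groupI)
    show "\<exists>y\<in>carrier (Ngroup S). y \<otimes>\<^bsub>Ngroup S\<^esub> x = \<one>\<^bsub>Ngroup S\<^esub>"
      if "x \<in> carrier (Ngroup S)" for x
      using that Nring.neg by force
  qed (simp_all add: Nring.add Nring_of_int[of 0, simplified] add.assoc)
  then show ?thesis
    by (rule group.group_comm_groupI) auto
qed

lemma inv_Ngroup: "x \<in> Nring S \<Longrightarrow> inv\<^bsub>Ngroup S\<^esub> x = - x"
  by (rule group.inv_equality[OF comm_group.axioms(2)[OF comm_group_Ngroup]])
    (auto intro: Nring.neg)

lemma subgroup_multN: "subgroup (multN g S) (Ngroup S)"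
  by (rule subgroup.intro)
    (use multN_add multN_uminus inv_Ngroup multN_subset_Nring[THEN subsetD] zero_mem_multN
      in auto)

lemma group_hom_mult_mod:
  assumes "g > 0"
  shows "group_hom integer_group (integer_mod_group g) (\<lambda>n. (m * n) mod int g)"
proof -
  have "(\<lambda>n. (m * n) mod int g) \<in> hom integer_group (integer_mod_group g)"
    using assms by (intro homI) (auto simp: carrier_integer_mod_group distrib_left mod_add_eq)
  then show ?thesis by (simp add: group_hom_def group_hom_axioms_def)
qed

lemma range_mod_integer_mod_group:
  assumes "g > 0"
  shows "range (\<lambda>n. n mod int g) = carrier (integer_mod_group g)"
proof -
  have "{0..<int g} \<subseteq> range (\<lambda>n. n mod int g)"
  proof
    fix x
    assume "x \<in> {0..<int g}"
    then have "x = x mod int g" by simp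
    then show "x \<in> range (\<lambda>n. n mod int g)" by blast
  qed
  then show ?thesis
    using assms by (auto simp: carrier_integer_mod_group)
qed

lemma kernel_mult_mod:
  assumes "q dvd g" "g > 0"
  shows "kernel integer_group (integer_mod_group g) (\<lambda>n. (int (g div q) * n) mod int g)
         = {n. int q dvd n}"
proof -
  obtain m where g: "g = q * m" using assms(1) ..
  then have "m > 0" "q > 0" using assms(2) by auto
  then show ?thesis
    by (auto simp: kernel_def g mult.commute[of q] dvd_eq_mod_eq_0[symmetric])
qed

definition int_coset :: "nat \<Rightarrow> nat set \<Rightarrow> int \<Rightarrow> rat set" where
  "int_coset g S n = multN g S #>\<^bsub>Ngroup S\<^esub> of_int n"

lemma group_hom_int_coset: "group_hom integer_group (Ngroup S Mod multN g S) (int_coset g S)"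
proof -
  interpret N: comm_group "Ngroup S" by (rule comm_group_Ngroup)
  interpret normal "multN g S" "Ngroup S"
    by (rule N.subgroup_imp_normal[OF subgroup_multN])
  have "int_coset g S \<in> hom integer_group (Ngroup S Mod multN g S)"
  proof (rule homI)
    show "int_coset g S n \<in> carrier (Ngroup S Mod multN g S)" for n
      using N.rcosetsI[of "multN g S" "of_int n"]
      by (simp add: int_coset_def FactGroup_def multN_subset_Nring Nring_of_int)
    show "int_coset g S (m \<otimes>\<^bsub>integer_group\<^esub> n)
          = int_coset g S m \<otimes>\<^bsub>Ngroup S Mod multN g S\<^esub> int_coset g S n" for m n
      unfolding int_coset_def FactGroup_def
      using rcos_sum[of "of_int m" "of_int n"] by (simp add: Nring_of_int)
  qed
  then show ?thesis
    using factorgroup_is_group by (simp add: group_hom_def group_hom_axioms_def)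
qed

lemma int_coset_surj:
  assumes "g > 0"
  shows "int_coset g S ` carrier integer_group = carrier (Ngroup S Mod multN g S)"
proof -
  interpret N: comm_group "Ngroup S" by (rule comm_group_Ngroup)
  have "X \<in> range (int_coset g S)" if X: "X \<in> carrier (Ngroup S Mod multN g S)" for X
  proof -
    obtain x where x: "x \<in> Nring S" "X = multN g S #>\<^bsub>Ngroup S\<^esub> x"
      using X by (auto simp: FactGroup_def RCOSETS_def)
    obtain n where "x - of_int n \<in> multN g S"
      using Nring_congruent_int[OF assms x(1)] by blast
    then have "x \<in> multN g S #>\<^bsub>Ngroup S\<^esub> of_int n"
      unfolding r_coset_def by (force intro: bexI[of _ "x - of_int n"])
    then have "X = int_coset g S n"
      using N.repr_independence[OF _ _ subgroup_multN] x
      by (simp add: int_coset_def Nring_of_int)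
    then show ?thesis by simp
  qed
  then show ?thesis
    using group_hom.hom_closed[OF group_hom_int_coset] by auto
qed

lemma kernel_int_coset:
  "kernel integer_group (Ngroup S Mod multN g S) (int_coset g S) = {n. of_int n \<in> multN g S}"
proof -
  interpret N: comm_group "Ngroup S" by (rule comm_group_Ngroup)
  have "multN g S #>\<^bsub>Ngroup S\<^esub> of_int n = multN g S \<longleftrightarrow> of_int n \<in> multN g S" for n
    using N.coset_join1[OF _ _ subgroup_multN] N.coset_join2[OF _ subgroup_multN]
    by (auto simp: Nring_of_int)
  then show ?thesis by (simp add: kernel_def FactGroup_def int_coset_def)
qed

lemma Ngroup_Mod_multN_iso:
  assumes "g > 0"
  obtains q where "q dvd g" "\<And>n. of_int n \<in> multN g S \<longleftrightarrow> int q dvd n"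
    "Ngroup S Mod multN g S
      \<cong> (integer_mod_group g)\<lparr>carrier := range (\<lambda>n. (int (g div q) * n) mod int g)\<rparr>"
proof -
  have "int g \<in> kernel integer_group (Ngroup S Mod multN g S) (int_coset g S)"
    using of_nat_mem_multN by (simp add: kernel_int_coset)
  then obtain q where q: "q dvd g"
    and ker: "kernel integer_group (Ngroup S Mod multN g S) (int_coset g S) = {n. int q dvd n}"
    using integer_subgroup_eq_multiples[OF group_hom.subgroup_kernel[OF group_hom_int_coset] _ assms]
    by blast
  have "Ngroup S Mod multN g S
      \<cong> (integer_mod_group g)\<lparr>carrier := range (\<lambda>n. (int (g div q) * n) mod int g)\<rparr>"
    using iso_onto_image_of_equal_kernels[OF group_hom_int_coset int_coset_surj[OF assms]
        group_hom_mult_mod[OF assms(1)]] ker kernel_mult_mod[OF q assms(1)] by simp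
  moreover have "of_int n \<in> multN g S \<longleftrightarrow> int q dvd n" for n
    using ker by (simp add: kernel_int_coset set_eq_iff)
  ultimately show thesis using that q by blast
qed

lemma Gcd_pred_pos:
  fixes A :: "nat set"
  assumes "p \<in> A" "p \<ge> 2"
  shows "Gcd ((\<lambda>p. p - 1) ` A) > 0"
proof -
  have "Gcd ((\<lambda>p. p - 1) ` A) dvd p - 1"
    using assms(1) by (intro Gcd_dvd) blast
  moreover have "p - 1 \<noteq> 0" using assms(2) by simp
  ultimately show ?thesis by (metis dvd_0_left gr0I)
qed

lemma Least_mem_smallest:
  assumes "S \<noteq> {}" "k > 0"
  shows "(LEAST p. p \<in> S) \<in> smallest k S"
proof -
  have "{q \<in> S. q < (LEAST p. p \<in> S)} = {}"
    using not_less_Least by blast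
  then have "card {q \<in> S. q < (LEAST p. p \<in> S)} < k"
    using assms(2) by (simp only: card.empty)
  moreover have "(LEAST p. p \<in> S) \<in> S"
    using assms(1) by (meson LeastI ex_in_conv)
  ultimately show ?thesis
    unfolding smallest_def by blast
qed

lemma Ngroup_Mod_multN_iso_integer_mod_group:
  assumes "g > 0" "\<forall>p\<in>S. p > 0 \<and> g dvd p - 1"
  shows "Ngroup S Mod multN g S \<cong> integer_mod_group g"
proof -
  obtain q where q: "q dvd g" "\<And>n. of_int n \<in> multN g S \<longleftrightarrow> int q dvd n" and
    iso: "Ngroup S Mod multN g S
          \<cong> (integer_mod_group g)\<lparr>carrier := range (\<lambda>n. (int (g div q) * n) mod int g)\<rparr>"
    using Ngroup_Mod_multN_iso[OF assms(1), where S = S] by blast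
  have "\<forall>p\<in>S. coprime p g"
    using assms(2) by (auto intro: coprime_if_dvd_pred)
  moreover have "of_int (int q) \<in> multN g S"
    using q(2)[of "int q"] by simp
  ultimately have "int g dvd int q"
    by (rule dvd_if_of_int_mem_multN[OF assms(1)])
  then have "q = g" using q(1) by (simp add: dvd_antisym)
  then show ?thesis
    using iso range_mod_integer_mod_group assms(1) by simp
qed

lemma Ngroup_Mod_multN_iso_subgroup:
  assumes "g > 0"
  shows "\<exists>H. subgroup H (integer_mod_group g) \<and>
           Ngroup S Mod multN g S \<cong> (integer_mod_group g)\<lparr>carrier := H\<rparr>"
proof -
  obtain q where "q dvd g" "\<And>n. of_int n \<in> multN g S \<longleftrightarrow> int q dvd n" and
    "Ngroup S Mod multN g S
      \<cong> (integer_mod_group g)\<lparr>carrier := range (\<lambda>n. (int (g div q) * n) mod int g)\<rparr>"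
    using Ngroup_Mod_multN_iso[OF assms, where S = S] by blast
  then show ?thesis
    using group_hom.img_is_subgroup[OF group_hom_mult_mod[OF assms(1)]] by auto
qed

theorem lemma6p11:
  fixes S :: "nat set"
  assumes "S \<noteq> {}"
    and "\<forall>p\<in>S. p \<ge> 2"
    and "pairwise coprime S"
  shows "(Ngroup S Mod multN (gS S) S) \<cong> integer_mod_group (gS S) \<and>
         (\<forall>k. 1 \<le> k \<and> (infinite S \<or> k \<le> card S) \<longrightarrow>
           (\<exists>H. subgroup H (integer_mod_group (gk k S)) \<and>
               (Ngroup S Mod multN (gk k S) S) \<cong> (integer_mod_group (gk k S))\<lparr>carrier := H\<rparr>))"
proof -
  have S: "\<forall>p\<in>S. p > 0" using assms(2) by force
  obtain p where "p \<in> S" using assms(1) by blast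
  then have "gS S > 0" using Gcd_pred_pos assms(2) by (simp add: gS_def)
  moreover have "\<forall>p\<in>S. gS S dvd p - 1" by (simp add: gS_def)
  ultimately have "Ngroup S Mod multN (gS S) S \<cong> integer_mod_group (gS S)"
    using Ngroup_Mod_multN_iso_integer_mod_group S by blast
  moreover have "gk k S > 0" if "1 \<le> k" for k
  proof -
    have "(LEAST p. p \<in> S) \<in> smallest k S" using Least_mem_smallest assms(1) that by simp
    then show ?thesis using Gcd_pred_pos assms(2) by (simp add: gk_def smallest_def)
  qed
  ultimately show ?thesis
    using Ngroup_Mod_multN_iso_subgroup by blast
qed

end
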